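(* Consider the online ADDIS setting described in the context, and assume the predictable sequences satisfy $\tau_j>\lambda_j\ge\alpha_j$ for every $j\in\mathbb N$. (a) If the null $p$-values are conditionally uniformly conservative, then any procedure with $\widehat{\mathrm{FDP}}_{\mathrm{ADDIS}}(t)\le\alpha$ for all $t\in\mathbb N$ (almost surely) satisfies $\mathrm{mFDR}(t)\le\alpha$ for all $t\in\mathbb N$. (b) If in addition the null $p$-values are independent of each other and of the non-null $p$-values, and for every $t$ the quantities $\alpha_t$, $\lambda_t$ and $1-\tau_t$ are monotonic functions of the past, then any procedure with $\widehat{\mathrm{FDP}}_{\mathrm{ADDIS}}(t)\le\alpha$ for all $t\in\mathbb N$ satisfies $\mathrm{FDR}(t)\le\alpha$ for all $t\in\mathbb N$.
   Context: Let $P_1,P_2,\dots$ be $p$-values for hypotheses $H_1,H_2,\dots$, and let $\mathcal H_0\subseteq\mathbb N$ be the (fixed, unknown) set of indices of true null hypotheses. Fix a target level $\alpha\in(0,1)$. An online procedure uses sequences $\{\alpha_j\},\{\lambda_j\},\{\tau_j\}$ with values in $[0,1]$ and defines indicators $S_j=\mathbf 1\{P_j\le\tau_j\}$, $C_j=\mathbf 1\{P_j\le\lambda_j\}$, $R_j=\mathbf 1\{P_j\le\alpha_j\}$ ($H_j$ is rejected iff $R_j=1$), and $R(t)=\{j\le t:R_j=1\}$. Let $\mathcal F^t=\sigma(R_{1:t},C_{1:t},S_{1:t})$ (with $\mathcal F^0$ trivial). The sequences are predictable: $\alpha_t,\lambda_t,\tau_t$ are $\mathcal F^{t-1}$-measurable,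 i.e. deterministic functions of $(R_{1:t-1},C_{1:t-1},S_{1:t-1})$. The null $p$-values are (conditionally) uniformly conservative if for every $t\in\mathcal H_0$ and all $x,\tau\in(0,1)$, $\Pr(P_t/\tau\le x\mid P_t\le\tau,\mathcal F^{t-1})\le x$ (equivalently, the conditional CDF $F$ of $P_t$ given $\mathcal F^{t-1}$ satisfies $F(\tau x)\le xF(\tau)$ for all $x,\tau\in[0,1]$). Define $$\widehat{\mathrm{FDP}}_{\mathrm{ADDIS}}(t)=\frac{\sum_{j\le t}\alpha_j\frac{\mathbf 1\{\lambda_j<P_j\le\tau_j\}}{\tau_j-\lambda_j}}{|R(t)|\vee1},$$ $\mathrm{FDR}(t)=\mathbb E\big[\frac{|\mathcal H_0\cap R(t)|}{|R(t)|\vee1}\big]$ and $\mathrm{mFDR}(t)=\frac{\mathbb E[|\mathcal H_0\cap R(t)|]}{\mathbb E[|R(t)|\vee1]}$. A function $f_t(R_{1:t-1},C_{1:t-1},S_{1:t-1}):\{0,1\}^{3(t-1)}\to[0,1]$ is a monotonic function of the past if it is coordinatewise nondecreasing in each $R_i$ and each $C_i$ and coordinatewise nonincreasing in each $S_i$. *)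

theory Defs
  imports "HOL-Probability.Probability"
begin

text \<open>Hypotheses are indexed by 1, 2, 3, ...
  A history of length n is the list of triples (R_j, C_j, S_j) for j = 1..n.
  A predictable sequence (alpha_t, lambda_t or tau_t) is given by a single function
  on histories: the value at time t is the function applied to the history of
  length t - 1 (so the time index t is the length of the argument plus one).\<close>

type_synonym hist = "(bool \<times> bool \<times> bool) list"

fun history :: "(nat \<Rightarrow> 'a \<Rightarrow> real) \<Rightarrow> (hist \<Rightarrow> real) \<Rightarrow> (hist \<Rightarrow> real) \<Rightarrow> (hist \<Rightarrow> real)
    \<Rightarrow> 'a \<Rightarrow> nat \<Rightarrow> hist" where
  "history P af lf tf \<omega> 0 = []"
| "history P af lf tf \<omega> (Suc n) =
     (let h = history P af lf tf \<omega> n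
      in h @ [(P (Suc n) \<omega> \<le> af h, P (Suc n) \<omega> \<le> lf h, P (Suc n) \<omega> \<le> tf h)])"

definition alphaj where "alphaj P af lf tf j \<omega> = af (history P af lf tf \<omega> (j - 1))"
definition lamj where "lamj P af lf tf j \<omega> = lf (history P af lf tf \<omega> (j - 1))"
definition tauj where "tauj P af lf tf j \<omega> = tf (history P af lf tf \<omega> (j - 1))"

definition Rset :: "(nat \<Rightarrow> 'a \<Rightarrow> real) \<Rightarrow> (hist \<Rightarrow> real) \<Rightarrow> (hist \<Rightarrow> real) \<Rightarrow> (hist \<Rightarrow> real)
    \<Rightarrow> nat \<Rightarrow> 'a \<Rightarrow> nat set" where
  "Rset P af lf tf t \<omega> = {j \<in> {1..t}. P j \<omega> \<le> alphaj P af lf tf j \<omega>}"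

definition FDPhat_ADDIS where
  "FDPhat_ADDIS P af lf tf t \<omega> =
     (\<Sum>j\<in>{1..t}. alphaj P af lf tf j \<omega> *
         (if lamj P af lf tf j \<omega> < P j \<omega> \<and> P j \<omega> \<le> tauj P af lf tf j \<omega> then 1 else 0)
         / (tauj P af lf tf j \<omega> - lamj P af lf tf j \<omega>))
     / max (real (card (Rset P af lf tf t \<omega>))) 1"

definition FDR where
  "FDR M P H0 af lf tf t =
     (\<integral>\<omega>. real (card (H0 \<inter> Rset P af lf tf t \<omega>)) / max (real (card (Rset P af lf tf t \<omega>))) 1 \<partial>M)"

definition mFDR where
  "mFDR M P H0 af lf tf t =
     (\<integral>\<omega>. real (card (H0 \<inter> Rset P af lf tf t \<omega>)) \<partial>M)
     / (\<integral>\<omega>. max (real (card (Rset P af lf tf t \<omega>))) 1 \<partial>M)"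

text \<open>F^{t-1} is generated by the finite-valued
  history of length t-1, so conditioning on F^{t-1} is conditioning on each atom
  {history = h}; the condition F(tau x) \<le> x F(tau) for the conditional CDF is
  stated multiplied through by Pr(history = h) (atoms of probability zero impose
  no constraint).\<close>
definition cond_unif_conservative where
  "cond_unif_conservative M P H0 af lf tf \<longleftrightarrow>
     (\<forall>t\<in>H0. \<forall>h. \<forall>x\<in>{0..1}. \<forall>s\<in>{0..1}.
        measure M {\<omega>\<in>space M. P t \<omega> \<le> s * x \<and> history P af lf tf \<omega> (t - 1) = h}
        \<le> x * measure M {\<omega>\<in>space M. P t \<omega> \<le> s \<and> history P af lf tf \<omega> (t - 1) = h})"

text \<open>Independence: the null p-values P_j (j in H0) and the block of all non-null
  p-values (P_k)_{k \<ge> 1, k \<notin> H0} are mutually independent.\<close>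
definition nullblock :: "nat set \<Rightarrow> nat option \<Rightarrow> nat set" where
  "nullblock H0 i = (case i of Some j \<Rightarrow> {j} | None \<Rightarrow> {1..} - H0)"

definition nulls_indep :: "'a measure \<Rightarrow> (nat \<Rightarrow> 'a \<Rightarrow> real) \<Rightarrow> nat set \<Rightarrow> bool" where
  "nulls_indep M P H0 \<longleftrightarrow>
     prob_space.indep_vars M (\<lambda>i. PiM (nullblock H0 i) (\<lambda>_. (borel :: real measure)))
       (\<lambda>i \<omega>. restrict (\<lambda>k. P k \<omega>) (nullblock H0 i)) (Some ` H0 \<union> {None})"

definition hist_le :: "hist \<Rightarrow> hist \<Rightarrow> bool" where
  "hist_le h h' \<longleftrightarrow> length h = length h' \<and>
     (\<forall>i<length h. (fst (h!i) \<longrightarrow> fst (h'!i)) \<and>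
                   (fst (snd (h!i)) \<longrightarrow> fst (snd (h'!i))) \<and>
                   (snd (snd (h'!i)) \<longrightarrow> snd (snd (h!i))))"

definition monotone_past :: "(hist \<Rightarrow> real) \<Rightarrow> bool" where
  "monotone_past f \<longleftrightarrow> (\<forall>h h'. hist_le h h' \<longrightarrow> f h \<le> f h')"

end

theory Submission
  imports Defs
begin

text \<open>
  On an atom of the history before time \<open>t\<close> the thresholds are constants
  \<open>\<alpha> \<le> \<lambda> < \<tau>\<close>, and a distribution function with \<open>F (s x) \<le> x F s\<close> satisfies
  \<open>F \<alpha> \<le> (\<alpha>/\<tau>) F \<tau>\<close> and \<open>F \<tau> - F \<lambda> \<ge> (1 - \<lambda>/\<tau>) F \<tau>\<close>. Hence for a null \<open>t\<close>,
  \<open>Pr(P t \<le> \<alpha>, atom) \<le> \<alpha>/(\<tau> - \<lambda>) Pr(\<lambda> < P t \<le> \<tau>, atom)\<close>. Summing over the atoms,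
  the expected number of false rejections is at most the expectation of the numerator
  of the FDP estimate, which is at most \<open>\<alpha> E(|R(T)| \<or> 1)\<close>: this is the mFDR bound.

  For the FDR the same atomwise bound is needed with the weight \<open>1/(|R(T)| \<or> 1)\<close>,
  which depends on \<open>P t\<close>. Setting \<open>P t\<close> to 0 gives a rejection count that is independent
  of \<open>P t\<close>; it equals \<open>|R(T)|\<close> when \<open>H t\<close> is rejected and, by monotonicity of the
  thresholds in the past, is at least \<open>|R(T)|\<close> when \<open>P t \<le> \<tau> t\<close>. Conditioning on the
  history together with this leave-one-out count bounds the contribution of each null
  to the FDR by the corresponding summand of the expected FDP estimate.
\<close>

section \<open>Histories\<close>

lemma length_history [simp]: "length (history P af lf tf \<omega> n) = n"
  by (induction n) (auto simp: Let_def)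

lemma history_cong:
  "(\<And>k. k \<in> {1..n} \<Longrightarrow> P k \<omega> = P' k \<omega>) \<Longrightarrow> history P af lf tf \<omega> n = history P' af lf tf \<omega> n"
  by (induction n) (auto simp: Let_def)

lemma sets_history_eq:
  assumes "\<And>k. k \<in> {1..n} \<Longrightarrow> P k \<in> borel_measurable N"
  shows "{\<omega>\<in>space N. history P af lf tf \<omega> n = h} \<in> sets N"
  using assms
proof (induction n arbitrary: h)
  case 0
  then show ?case by (cases h) auto
next
  case (Suc n)
  have [measurable]: "P (Suc n) \<in> borel_measurable N" using Suc.prems by simp
  have "{\<omega>\<in>space N. history P af lf tf \<omega> (Suc n) = h} =
      {\<omega>\<in>space N. history P af lf tf \<omega> n = butlast h} \<inter>
      {\<omega>\<in>space N. h \<noteq> [] \<and> (P (Suc n) \<omega> \<le> af (butlast h) \<longleftrightarrow> fst (last h))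
         \<and> (P (Suc n) \<omega> \<le> lf (butlast h) \<longleftrightarrow> fst (snd (last h)))
         \<and> (P (Suc n) \<omega> \<le> tf (butlast h) \<longleftrightarrow> snd (snd (last h)))}"
    by (cases h rule: rev_cases) (auto simp: Let_def)
  also have "\<dots> \<in> sets N"
    using Suc by (intro sets.Int) (auto, measurable)
  finally show ?case .
qed

lemma measurable_history:
  assumes "\<And>k. k \<in> {1..n} \<Longrightarrow> P k \<in> borel_measurable N"
  shows "(\<lambda>\<omega>. history P af lf tf \<omega> n) \<in> N \<rightarrow>\<^sub>M count_space UNIV"
proof (subst measurable_count_space_eq2_countable, intro conjI ballI)
  fix h :: hist
  have "(\<lambda>\<omega>. history P af lf tf \<omega> n) -` {h} \<inter> space N = {\<omega>\<in>space N. history P af lf tf \<omega> n = h}"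
    by auto
  then show "(\<lambda>\<omega>. history P af lf tf \<omega> n) -` {h} \<inter> space N \<in> sets N"
    using sets_history_eq[OF assms] by simp
qed auto

lemma borel_measurable_thresholds:
  assumes "\<And>k. k \<in> {1..j - 1} \<Longrightarrow> P k \<in> borel_measurable N"
  shows "alphaj P af lf tf j \<in> borel_measurable N"
    and "lamj P af lf tf j \<in> borel_measurable N"
    and "tauj P af lf tf j \<in> borel_measurable N"
  unfolding alphaj_def[abs_def] lamj_def[abs_def] tauj_def[abs_def]
  by (rule measurable_compose[OF measurable_history[OF assms] borel_measurable_count_space], simp)+

lemma Rset_subset: "Rset P af lf tf T \<omega> \<subseteq> {1..T}"
  unfolding Rset_def by auto

lemma card_Rset_le: "card (Rset P af lf tf T \<omega>) \<le> T"
  using card_mono[OF _ Rset_subset] by fastforce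

lemma real_card_Rset_eq_sum:
  "real (card (Rset P af lf tf T \<omega>)) = (\<Sum>j\<in>{1..T}. if P j \<omega> \<le> alphaj P af lf tf j \<omega> then 1 else 0)"
proof -
  have "Rset P af lf tf T \<omega> = {1..T} \<inter> {j. P j \<omega> \<le> alphaj P af lf tf j \<omega>}"
    unfolding Rset_def by auto
  then show ?thesis by (simp add: sum.If_cases)
qed

lemma borel_measurable_card_Rset:
  assumes "\<And>k. k \<in> {1..T} \<Longrightarrow> P k \<in> borel_measurable N"
  shows "(\<lambda>\<omega>. real (card (Rset P af lf tf T \<omega>))) \<in> borel_measurable N"
  unfolding real_card_Rset_eq_sum
proof (intro borel_measurable_sum)
  fix j assume j: "j \<in> {1..T}"
  have [measurable]: "P j \<in> borel_measurable N" "alphaj P af lf tf j \<in> borel_measurable N"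
    using assms j by (auto intro!: borel_measurable_thresholds)
  show "(\<lambda>\<omega>. if P j \<omega> \<le> alphaj P af lf tf j \<omega> then 1 else 0 :: real) \<in> borel_measurable N"
    by measurable
qed

section \<open>Changing a single p-value\<close>

lemma history_fun_upd_eq:
  assumes "h = history P af lf tf \<omega> (t - 1)"
    and "(P t \<omega> \<le> af h, P t \<omega> \<le> lf h, P t \<omega> \<le> tf h) = (v \<le> af h, v \<le> lf h, v \<le> tf h)"
  shows "history (P(t := \<lambda>_. v)) af lf tf \<omega> n = history P af lf tf \<omega> n"
proof (induction n)
  case (Suc n)
  then show ?case
    using assms by (cases "Suc n = t") (auto simp: Let_def)
qed simp

lemma Rset_fun_upd_eq:
  assumes "h = history P af lf tf \<omega> (t - 1)"
    and "(P t \<omega> \<le> af h, P t \<omega> \<le> lf h, P t \<omega> \<le> tf h) = (v \<le> af h, v \<le> lf h, v \<le> tf h)"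
  shows "Rset (P(t := \<lambda>_. v)) af lf tf T \<omega> = Rset P af lf tf T \<omega>"
  using assms unfolding Rset_def alphaj_def history_fun_upd_eq[OF assms] by auto

lemma hist_le_snoc:
  assumes "hist_le h h'" "fst x \<longrightarrow> fst y" "fst (snd x) \<longrightarrow> fst (snd y)" "snd (snd y) \<longrightarrow> snd (snd x)"
  shows "hist_le (h @ [x]) (h' @ [y])"
  using assms unfolding hist_le_def by (auto simp: nth_append less_Suc_eq)

lemma hist_le_history_fun_upd:
  assumes mono: "monotone_past af" "monotone_past lf" "monotone_past (\<lambda>h. 1 - tf h)"
    and h: "h = history P af lf tf \<omega> (t - 1)"
    and at_t: "P t \<omega> \<le> af h \<longrightarrow> v \<le> af h" "P t \<omega> \<le> lf h \<longrightarrow> v \<le> lf h" "v \<le> tf h \<longrightarrow> P t \<omega> \<le> tf h"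
  shows "hist_le (history P af lf tf \<omega> n) (history (P(t := \<lambda>_. v)) af lf tf \<omega> n)"
proof (induction n)
  case 0
  then show ?case by (simp add: hist_le_def)
next
  case (Suc n)
  let ?h = "history P af lf tf \<omega> n" and ?h' = "history (P(t := \<lambda>_. v)) af lf tf \<omega> n"
  show ?case
  proof (cases "Suc n = t")
    case True
    have same: "?h' = ?h" by (rule history_cong) (use True in auto)
    have "h = ?h" using h True by (metis diff_Suc_1)
    then have "hist_le (?h @ [(P t \<omega> \<le> af ?h, P t \<omega> \<le> lf ?h, P t \<omega> \<le> tf ?h)])
        (?h' @ [(v \<le> af ?h, v \<le> lf ?h, v \<le> tf ?h)])"
      using at_t by (intro hist_le_snoc[OF Suc.IH]) simp_all
    then show ?thesis
      unfolding history.simps Let_def by (simp only: True fun_upd_same same)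
  next
    case False
    have thresholds: "af ?h \<le> af ?h'" "lf ?h \<le> lf ?h'" "1 - tf ?h \<le> 1 - tf ?h'"
      using Suc.IH mono unfolding monotone_past_def by blast+
    have upd: "(P(t := \<lambda>_. v)) (Suc n) = P (Suc n)" using False by simp
    show ?thesis
      unfolding history.simps Let_def upd
      by (intro hist_le_snoc[OF Suc.IH]) (use thresholds in auto)
  qed
qed

lemma Rset_subset_fun_upd:
  assumes mono: "monotone_past af" "monotone_past lf" "monotone_past (\<lambda>h. 1 - tf h)"
    and h: "h = history P af lf tf \<omega> (t - 1)"
    and at_t: "P t \<omega> \<le> af h \<longrightarrow> v \<le> af h" "P t \<omega> \<le> lf h \<longrightarrow> v \<le> lf h" "v \<le> tf h \<longrightarrow> P t \<omega> \<le> tf h"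
  shows "Rset P af lf tf T \<omega> \<subseteq> Rset (P(t := \<lambda>_. v)) af lf tf T \<omega>"
proof
  fix j assume j: "j \<in> Rset P af lf tf T \<omega>"
  have le: "hist_le (history P af lf tf \<omega> (j - 1)) (history (P(t := \<lambda>_. v)) af lf tf \<omega> (j - 1))"
    by (rule hist_le_history_fun_upd[OF assms])
  show "j \<in> Rset (P(t := \<lambda>_. v)) af lf tf T \<omega>"
  proof (cases "j = t")
    case True
    have "history (P(t := \<lambda>_. v)) af lf tf \<omega> (t - 1) = h"
      unfolding h by (rule history_cong) auto
    then show ?thesis using j True at_t h unfolding Rset_def alphaj_def by auto
  next
    case False
    then show ?thesis
      using j le mono(1) unfolding Rset_def alphaj_def monotone_past_def by (auto intro: order_trans)
  qed
qed

section \<open>Conservative distribution functions and finite partitions\<close>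

lemma conservative_cdf_bound:
  fixes F :: "real \<Rightarrow> real"
  assumes cons: "\<And>x s. x \<in> {0..1} \<Longrightarrow> s \<in> {0..1} \<Longrightarrow> F (s * x) \<le> x * F s"
    and a: "0 \<le> a" "a \<le> l" "l < \<tau>" "\<tau> \<le> 1"
  shows "F a \<le> a / (\<tau> - l) * (F \<tau> - F l)"
proof -
  have "\<tau> > 0" using a by linarith
  have Fa: "F a \<le> a / \<tau> * F \<tau>"
    using cons[of "a / \<tau>" \<tau>] a \<open>\<tau> > 0\<close> by simp
  have "F l \<le> l / \<tau> * F \<tau>"
    using cons[of "l / \<tau>" \<tau>] a \<open>\<tau> > 0\<close> by simp
  then have "(\<tau> - l) / \<tau> * F \<tau> \<le> F \<tau> - F l"
    using \<open>\<tau> > 0\<close> by (simp add: field_simps)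
  then have "a / (\<tau> - l) * ((\<tau> - l) / \<tau> * F \<tau>) \<le> a / (\<tau> - l) * (F \<tau> - F l)"
    using a by (intro mult_left_mono) auto
  with Fa a show ?thesis by simp
qed

context finite_measure
begin

lemma measure_le_conservative:
  assumes [measurable]: "X \<in> borel_measurable M" "B \<in> sets M"
    and cons: "\<And>x s. x \<in> {0..1} \<Longrightarrow> s \<in> {0..1} \<Longrightarrow>
       measure M ({\<omega>\<in>space M. X \<omega> \<le> s * x} \<inter> B) \<le> x * measure M ({\<omega>\<in>space M. X \<omega> \<le> s} \<inter> B)"
    and "0 \<le> a" "a \<le> l" "l < \<tau>" "\<tau> \<le> 1"
  shows "measure M ({\<omega>\<in>space M. X \<omega> \<le> a} \<inter> B)
    \<le> a / (\<tau> - l) * measure M ({\<omega>\<in>space M. l < X \<omega> \<and> X \<omega> \<le> \<tau>} \<inter> B)"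
proof -
  let ?F = "\<lambda>v. measure M ({\<omega>\<in>space M. X \<omega> \<le> v} \<inter> B)"
  have "{\<omega>\<in>space M. l < X \<omega> \<and> X \<omega> \<le> \<tau>} \<inter> B
      = ({\<omega>\<in>space M. X \<omega> \<le> \<tau>} \<inter> B) - ({\<omega>\<in>space M. X \<omega> \<le> l} \<inter> B)"
    by auto
  also have "measure M \<dots> = ?F \<tau> - ?F l"
    using \<open>l < \<tau>\<close> by (intro finite_measure_Diff) auto
  finally show ?thesis
    using conservative_cdf_bound[of ?F] cons assms by simp
qed

lemma integral_sum_partition:
  fixes f :: "'a \<Rightarrow> real"
  assumes "finite I" "\<And>\<omega>. \<omega> \<in> space M \<Longrightarrow> \<phi> \<omega> \<in> I"
    and "\<And>i. i \<in> I \<Longrightarrow> {\<omega>\<in>space M. \<phi> \<omega> = i} \<in> sets M" and "integrable M f"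
  shows "integral\<^sup>L M f = (\<Sum>i\<in>I. \<integral>\<omega>. indicator {\<omega>\<in>space M. \<phi> \<omega> = i} \<omega> * f \<omega> \<partial>M)"
proof -
  have "integral\<^sup>L M f = (\<integral>\<omega>. (\<Sum>i\<in>I. indicator {\<omega>\<in>space M. \<phi> \<omega> = i} \<omega> * f \<omega>) \<partial>M)"
  proof (intro Bochner_Integration.integral_cong refl)
    fix \<omega> assume "\<omega> \<in> space M"
    then show "f \<omega> = (\<Sum>i\<in>I. indicator {\<omega>\<in>space M. \<phi> \<omega> = i} \<omega> * f \<omega>)"
      using assms(1,2) by (simp add: indicator_def)
  qed
  also have "\<dots> = (\<Sum>i\<in>I. \<integral>\<omega>. indicator {\<omega>\<in>space M. \<phi> \<omega> = i} \<omega> * f \<omega> \<partial>M)"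
    by (rule Bochner_Integration.integral_sum) (use integrable_mult_indicator[OF assms(3,4)] in auto)
  finally show ?thesis .
qed

lemma integral_mono_partition:
  fixes f g :: "'a \<Rightarrow> real"
  assumes "finite I" "\<And>\<omega>. \<omega> \<in> space M \<Longrightarrow> \<phi> \<omega> \<in> I"
    and "\<And>i. i \<in> I \<Longrightarrow> {\<omega>\<in>space M. \<phi> \<omega> = i} \<in> sets M"
    and "integrable M f" "integrable M g"
    and "\<And>i. i \<in> I \<Longrightarrow> (\<integral>\<omega>. indicator {\<omega>\<in>space M. \<phi> \<omega> = i} \<omega> * f \<omega> \<partial>M)
        \<le> (\<integral>\<omega>. indicator {\<omega>\<in>space M. \<phi> \<omega> = i} \<omega> * g \<omega> \<partial>M)"
  shows "integral\<^sup>L M f \<le> integral\<^sup>L M g"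
  using assms by (simp add: integral_sum_partition[of I \<phi>] sum_mono)

lemma integral_indicator_mult_const:
  fixes f :: "'a \<Rightarrow> real"
  assumes "A \<in> sets M" "B \<in> sets M" "\<And>\<omega>. \<omega> \<in> B \<Longrightarrow> f \<omega> = c * indicator A \<omega>"
  shows "(\<integral>\<omega>. indicator B \<omega> * f \<omega> \<partial>M) = c * measure M (A \<inter> B)"
proof -
  have "(\<integral>\<omega>. indicator B \<omega> * f \<omega> \<partial>M) = (\<integral>\<omega>. c * indicator (A \<inter> B) \<omega> \<partial>M)"
    using assms by (intro Bochner_Integration.integral_cong) (auto simp: indicator_def)
  then show ?thesis
    using assms by simp
qed

end

section \<open>The ADDIS procedure\<close>

definition addis_term :: "(nat \<Rightarrow> 'a \<Rightarrow> real) \<Rightarrow> (hist \<Rightarrow> real) \<Rightarrow> (hist \<Rightarrow> real) \<Rightarrow> (hist \<Rightarrow> real)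
    \<Rightarrow> nat \<Rightarrow> 'a \<Rightarrow> real" where
  "addis_term P af lf tf j \<omega> = alphaj P af lf tf j \<omega> *
     (if lamj P af lf tf j \<omega> < P j \<omega> \<and> P j \<omega> \<le> tauj P af lf tf j \<omega> then 1 else 0)
     / (tauj P af lf tf j \<omega> - lamj P af lf tf j \<omega>)"

lemma FDPhat_ADDIS_eq:
  "FDPhat_ADDIS P af lf tf t \<omega> =
     (\<Sum>j\<in>{1..t}. addis_term P af lf tf j \<omega>) / max (real (card (Rset P af lf tf t \<omega>))) 1"
  unfolding FDPhat_ADDIS_def addis_term_def ..

locale addis = prob_space M for M :: "'a measure" +
  fixes P :: "nat \<Rightarrow> 'a \<Rightarrow> real" and H0 :: "nat set" and af lf tf :: "hist \<Rightarrow> real"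
  assumes borel_measurable_P [measurable]: "\<And>j. P j \<in> borel_measurable M"
    and H0_pos: "H0 \<subseteq> {1..}"
    and af: "\<And>h. af h \<in> {0..1}" and lf: "\<And>h. lf h \<in> {0..1}" and tf: "\<And>h. tf h \<in> {0..1}"
    and thresholds_ordered: "AE \<omega> in M. \<forall>j\<ge>1. tauj P af lf tf j \<omega> > lamj P af lf tf j \<omega>
                          \<and> lamj P af lf tf j \<omega> \<ge> alphaj P af lf tf j \<omega>"
    and conservative: "cond_unif_conservative M P H0 af lf tf"
begin

abbreviation "atom n h \<equiv> {\<omega>\<in>space M. history P af lf tf \<omega> n = h}"
abbreviation "rejection j \<equiv> {\<omega>\<in>space M. P j \<omega> \<le> alphaj P af lf tf j \<omega>}"
abbreviation "D \<equiv> addis_term P af lf tf"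
abbreviation "nR T \<omega> \<equiv> max (real (card (Rset P af lf tf T \<omega>))) 1"

lemma finite_histories: "finite {h :: hist. length h = n}"
  using finite_lists_length_eq[of "UNIV :: (bool \<times> bool \<times> bool) set" n] by simp

lemma sets_atom [measurable]: "atom n h \<in> sets M"
  by (rule sets_history_eq) simp

lemma borel_measurable_thresholds_M [measurable]:
  "alphaj P af lf tf j \<in> borel_measurable M" "lamj P af lf tf j \<in> borel_measurable M"
  "tauj P af lf tf j \<in> borel_measurable M"
  by (rule borel_measurable_thresholds; simp)+

lemma borel_measurable_D [measurable]: "D j \<in> borel_measurable M"
  unfolding addis_term_def[abs_def] by measurable

lemma borel_measurable_nR [measurable]: "nR T \<in> borel_measurable M"
  using borel_measurable_card_Rset[of T P M af lf tf] by measurable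

lemma abs_D_le: "\<bar>D j \<omega>\<bar> \<le> (\<Sum>h | length h = j - 1. \<bar>af h / (tf h - lf h)\<bar>)"
proof -
  let ?h = "history P af lf tf \<omega> (j - 1)"
  have "\<bar>D j \<omega>\<bar> \<le> \<bar>af ?h / (tf ?h - lf ?h)\<bar>"
    unfolding addis_term_def alphaj_def lamj_def tauj_def by (auto simp: abs_mult)
  also have "\<dots> \<le> (\<Sum>h | length h = j - 1. \<bar>af h / (tf h - lf h)\<bar>)"
    by (rule member_le_sum) (auto simp: finite_histories)
  finally show ?thesis .
qed

lemma integrable_D_mult:
  fixes W :: "'a \<Rightarrow> real"
  assumes "W \<in> borel_measurable M" "\<And>\<omega>. \<bar>W \<omega>\<bar> \<le> 1"
  shows "integrable M (\<lambda>\<omega>. D j \<omega> * W \<omega>)"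
proof (rule integrable_const_bound[where B = "\<Sum>h | length h = j - 1. \<bar>af h / (tf h - lf h)\<bar>"])
  have "\<bar>D j \<omega> * W \<omega>\<bar> \<le> \<bar>D j \<omega>\<bar>" for \<omega>
    using assms(2)[of \<omega>] by (simp add: abs_mult mult_left_le)
  then show "AE \<omega> in M. norm (D j \<omega> * W \<omega>) \<le> (\<Sum>h | length h = j - 1. \<bar>af h / (tf h - lf h)\<bar>)"
    using abs_D_le order_trans by (intro AE_I2) fastforce
qed (use assms in measurable)

lemma integrable_rejection_mult:
  fixes W :: "'a \<Rightarrow> real"
  assumes "W \<in> borel_measurable M" "\<And>\<omega>. \<bar>W \<omega>\<bar> \<le> 1"
  shows "integrable M (\<lambda>\<omega>. indicator (rejection j) \<omega> * W \<omega>)"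
proof (rule integrable_const_bound[where B = 1])
  show "AE \<omega> in M. norm (indicator (rejection j) \<omega> * W \<omega>) \<le> (1::real)"
    using assms(2) by (intro AE_I2) (simp add: indicator_def abs_mult)
qed (use assms in measurable)

lemma integrable_nR: "integrable M (nR T)"
proof (rule integrable_const_bound[where B = "real T + 1"])
  have "norm (nR T \<omega>) \<le> real T + 1" for \<omega>
    using card_Rset_le[of P af lf tf T \<omega>] by (simp add: max_def of_nat_le_iff[symmetric] del: of_nat_le_iff)
  then show "AE \<omega> in M. norm (nR T \<omega>) \<le> real T + 1"
    by simp
qed measurable

lemma D_nonneg: "AE \<omega> in M. \<forall>j\<ge>1. 0 \<le> D j \<omega>"
  using thresholds_ordered
proof (rule AE_mp, intro AE_I2 impI allI)
  fix \<omega> and j :: nat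
  assume "\<forall>j\<ge>1. lamj P af lf tf j \<omega> < tauj P af lf tf j \<omega> \<and> alphaj P af lf tf j \<omega> \<le> lamj P af lf tf j \<omega>"
    and "1 \<le> j"
  then show "0 \<le> D j \<omega>"
    using af unfolding addis_term_def alphaj_def by simp
qed

lemma thresholds_ordered_on_atom:
  assumes "B \<subseteq> atom (j - 1) h" "B \<in> sets M" "prob B \<noteq> 0" "1 \<le> j"
  shows "af h \<le> lf h \<and> lf h < tf h"
proof -
  let ?ordered = "\<lambda>\<omega>. \<forall>j\<ge>1. lamj P af lf tf j \<omega> < tauj P af lf tf j \<omega>
      \<and> alphaj P af lf tf j \<omega> \<le> lamj P af lf tf j \<omega>"
  have "\<not> (AE \<omega> in M. \<omega> \<notin> B)"
    using assms(3) AE_iff_null_sets[OF assms(2)] by (auto simp: measure_def)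
  moreover have "AE \<omega> in M. \<omega> \<notin> B" if "\<forall>\<omega>\<in>B. \<not> ?ordered \<omega>"
    using thresholds_ordered by (rule AE_mp) (rule AE_I2, use that in auto)
  ultimately obtain \<omega> where "\<omega> \<in> B" "?ordered \<omega>"
    by blast
  with assms show ?thesis unfolding tauj_def lamj_def alphaj_def by force
qed

lemma atom_weighted_rejection_le:
  fixes W :: "'a \<Rightarrow> real"
  assumes "1 \<le> j" "B \<subseteq> atom (j - 1) h" "B \<in> sets M" "0 \<le> c" "\<And>\<omega>. \<omega> \<in> B \<Longrightarrow> W \<omega> = c"
    and cons: "\<And>x s. x \<in> {0..1} \<Longrightarrow> s \<in> {0..1} \<Longrightarrow>
       prob ({\<omega>\<in>space M. P j \<omega> \<le> s * x} \<inter> B) \<le> x * prob ({\<omega>\<in>space M. P j \<omega> \<le> s} \<inter> B)"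
  shows "(\<integral>\<omega>. indicator B \<omega> * (indicator (rejection j) \<omega> * W \<omega>) \<partial>M)
    \<le> (\<integral>\<omega>. indicator B \<omega> * (D j \<omega> * W \<omega>) \<partial>M)"
proof -
  let ?A = "{\<omega>\<in>space M. P j \<omega> \<le> af h}"
  let ?C = "{\<omega>\<in>space M. lf h < P j \<omega> \<and> P j \<omega> \<le> tf h}"
  have on_B: "history P af lf tf \<omega> (j - 1) = h" "W \<omega> = c" if "\<omega> \<in> B" for \<omega>
    using that assms(2,5) by auto
  have "(\<integral>\<omega>. indicator B \<omega> * (indicator (rejection j) \<omega> * W \<omega>) \<partial>M) = c * prob (?A \<inter> B)"
    using assms(3) on_B
    by (intro integral_indicator_mult_const) (auto simp: alphaj_def indicator_def)
  also have "\<dots> \<le> c * (af h / (tf h - lf h)) * prob (?C \<inter> B)"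
  proof (cases "prob B = 0")
    case True
    have "prob (?A \<inter> B) \<le> prob B" "prob (?C \<inter> B) \<le> prob B"
      using assms(3) by (auto intro!: finite_measure_mono)
    with True show ?thesis by (simp add: measure_le_0_iff)
  next
    case False
    then have "af h \<le> lf h" "lf h < tf h"
      using thresholds_ordered_on_atom assms(1-3) by blast+
    then show ?thesis
      using assms(3,4) cons af[of h] tf[of h] unfolding mult.assoc
      by (intro mult_left_mono measure_le_conservative) auto
  qed
  also have "\<dots> = (\<integral>\<omega>. indicator B \<omega> * (D j \<omega> * W \<omega>) \<partial>M)"
    using assms(3) on_B sets.sets_into_space[OF assms(3)]
    by (intro integral_indicator_mult_const[symmetric])
       (auto simp: addis_term_def alphaj_def lamj_def tauj_def indicator_def)
  finally show ?thesis .
qed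

lemma conservative_on_atom:
  assumes "j \<in> H0" "x \<in> {0..1}" "s \<in> {0..1}"
  shows "prob ({\<omega>\<in>space M. P j \<omega> \<le> s * x} \<inter> atom (j - 1) h)
    \<le> x * prob ({\<omega>\<in>space M. P j \<omega> \<le> s} \<inter> atom (j - 1) h)"
proof -
  have "{\<omega>\<in>space M. P j \<omega> \<le> v} \<inter> atom (j - 1) h
      = {\<omega>\<in>space M. P j \<omega> \<le> v \<and> history P af lf tf \<omega> (j - 1) = h}" for v
    by auto
  then show ?thesis
    using conservative assms unfolding cond_unif_conservative_def by simp
qed

lemma prob_rejection_le_integral_D:
  assumes "j \<in> H0"
  shows "prob (rejection j) \<le> integral\<^sup>L M (D j)"
proof -
  have "(\<integral>\<omega>. indicator (rejection j) \<omega> * 1 \<partial>M) \<le> (\<integral>\<omega>. D j \<omega> * 1 \<partial>M)"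
  proof (rule integral_mono_partition[OF finite_histories, where \<phi> = "\<lambda>\<omega>. history P af lf tf \<omega> (j - 1)"])
    fix h :: hist
    show "(\<integral>\<omega>. indicator (atom (j - 1) h) \<omega> * (indicator (rejection j) \<omega> * 1) \<partial>M)
      \<le> (\<integral>\<omega>. indicator (atom (j - 1) h) \<omega> * (D j \<omega> * 1) \<partial>M)"
      using assms H0_pos by (intro atom_weighted_rejection_le[where h = h] conservative_on_atom) auto
  qed (use integrable_rejection_mult[of "\<lambda>_. 1"] integrable_D_mult[of "\<lambda>_. 1"] in simp_all)
  then show ?thesis
    by simp
qed

lemma card_null_rejections_eq:
  assumes "\<omega> \<in> space M"
  shows "real (card (H0 \<inter> Rset P af lf tf T \<omega>)) = (\<Sum>j\<in>H0 \<inter> {1..T}. indicator (rejection j) \<omega>)"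
proof -
  have "H0 \<inter> Rset P af lf tf T \<omega> = (H0 \<inter> {1..T}) \<inter> {j. P j \<omega> \<le> alphaj P af lf tf j \<omega>}"
    unfolding Rset_def by auto
  then show ?thesis
    using assms by (simp add: indicator_def sum.If_cases)
qed

lemma mFDR_le:
  assumes FDP: "AE \<omega> in M. \<forall>t. FDPhat_ADDIS P af lf tf t \<omega> \<le> \<alpha>"
  shows "mFDR M P H0 af lf tf T \<le> \<alpha>"
proof -
  have "(\<integral>\<omega>. real (card (H0 \<inter> Rset P af lf tf T \<omega>)) \<partial>M) = (\<Sum>j\<in>H0 \<inter> {1..T}. prob (rejection j))"
    using integrable_rejection_mult[of "\<lambda>_. 1"]
    by (simp add: card_null_rejections_eq Bochner_Integration.integral_sum cong: Bochner_Integration.integral_cong)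
  also have "\<dots> \<le> (\<Sum>j\<in>H0 \<inter> {1..T}. integral\<^sup>L M (D j))"
    by (intro sum_mono prob_rejection_le_integral_D) auto
  also have "\<dots> \<le> (\<Sum>j\<in>{1..T}. integral\<^sup>L M (D j))"
    using D_nonneg by (intro sum_mono2 integral_nonneg_AE) auto
  also have "\<dots> = (\<integral>\<omega>. (\<Sum>j\<in>{1..T}. D j \<omega>) \<partial>M)"
    using integrable_D_mult[of "\<lambda>_. 1"] by (intro Bochner_Integration.integral_sum[symmetric]) simp
  also have "\<dots> \<le> (\<integral>\<omega>. \<alpha> * nR T \<omega> \<partial>M)"
  proof (rule integral_mono_AE)
    show "AE \<omega> in M. (\<Sum>j\<in>{1..T}. D j \<omega>) \<le> \<alpha> * nR T \<omega>"
      using FDP by (rule AE_mp) (auto simp: FDPhat_ADDIS_eq divide_le_eq)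
  qed (use integrable_D_mult[of "\<lambda>_. 1"] integrable_nR in auto)
  finally have "(\<integral>\<omega>. real (card (H0 \<inter> Rset P af lf tf T \<omega>)) \<partial>M) \<le> \<alpha> * integral\<^sup>L M (nR T)"
    by simp
  moreover have "integral\<^sup>L M (nR T) \<ge> 1"
    using integral_mono[OF integrable_const integrable_nR, of 1] by (simp add: prob_space)
  ultimately show ?thesis
    unfolding mFDR_def by (simp add: divide_le_eq)
qed

subsection \<open>Independence of a null p-value from the other p-values\<close>

definition block_events :: "nat option \<Rightarrow> 'a set set" where
  "block_events i = {(\<lambda>\<omega>. restrict (\<lambda>k. P k \<omega>) (nullblock H0 i)) -` A \<inter> space M | A.
     A \<in> sets (PiM (nullblock H0 i) (\<lambda>_. borel :: real measure))}"

definition others :: "nat \<Rightarrow> 'a measure" where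
  "others t = sigma (space M) (\<Union>i\<in>Some ` H0 \<union> {None} - {Some t}. block_events i)"

lemma block_events_subset: "block_events i \<subseteq> sets M"
  unfolding block_events_def by (auto intro!: measurable_sets measurable_restrict)

lemma pvalue_event_in_block_events:
  assumes "k \<in> nullblock H0 i" "S \<in> sets borel"
  shows "{\<omega>\<in>space M. P k \<omega> \<in> S} \<in> block_events i"
proof -
  let ?A = "(\<lambda>f. f k) -` S \<inter> space (PiM (nullblock H0 i) (\<lambda>_. borel :: real measure))"
  have "?A \<in> sets (PiM (nullblock H0 i) (\<lambda>_. borel :: real measure))"
    using assms by (intro measurable_sets[OF measurable_component_singleton])
  moreover have "(\<lambda>\<omega>. restrict (\<lambda>k. P k \<omega>) (nullblock H0 i)) -` ?A \<inter> space M = {\<omega>\<in>space M. P k \<omega> \<in> S}"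
    using assms by (auto simp: space_PiM)
  ultimately show ?thesis
    unfolding block_events_def by blast
qed

lemma space_others [simp]: "space (others t) = space M"
  and sets_others: "sets (others t) = sigma_sets (space M) (\<Union>i\<in>Some ` H0 \<union> {None} - {Some t}. block_events i)"
proof -
  have "(\<Union>i\<in>Some ` H0 \<union> {None} - {Some t}. block_events i) \<subseteq> Pow (space M)"
    using block_events_subset sets.sets_into_space by blast
  then show "space (others t) = space M"
    and "sets (others t) = sigma_sets (space M) (\<Union>i\<in>Some ` H0 \<union> {None} - {Some t}. block_events i)"
    unfolding others_def by simp_all
qed

lemma subalgebra_others: "subalgebra M (others t)"
  unfolding subalgebra_def sets_others using block_events_subset
  by (auto intro!: sets.sigma_sets_subset)

lemma borel_measurable_others:
  assumes "1 \<le> k" "k \<noteq> t"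
  shows "P k \<in> borel_measurable (others t)"
proof (rule measurableI)
  fix S :: "real set" assume "S \<in> sets borel"
  define i where "i = (if k \<in> H0 then Some k else None)"
  have "k \<in> nullblock H0 i" "i \<in> Some ` H0 \<union> {None} - {Some t}"
    using assms unfolding i_def nullblock_def by auto
  with \<open>S \<in> sets borel\<close> have "{\<omega>\<in>space M. P k \<omega> \<in> S} \<in> sets (others t)"
    unfolding sets_others by (blast intro: pvalue_event_in_block_events)
  then show "P k -` S \<inter> space (others t) \<in> sets (others t)"
    by (simp add: Int_commute vimage_def Collect_conj_eq[symmetric] Int_def)
qed simp

lemma indep_null_others:
  assumes "nulls_indep M P H0" "t \<in> H0" "S \<in> sets borel" "B \<in> sets (others t)"
  shows "prob ({\<omega>\<in>space M. P t \<omega> \<in> S} \<inter> B) = prob {\<omega>\<in>space M. P t \<omega> \<in> S} * prob B"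
proof -
  let ?I = "\<lambda>b. if b then {Some t} else Some ` H0 \<union> {None} - {Some t}"
  have "indep_sets block_events (Some ` H0 \<union> {None})"
    using assms(1) unfolding nulls_indep_def indep_vars_def2 block_events_def by auto
  moreover have "(\<Union>b. ?I b) = Some ` H0 \<union> {None}"
    using assms(2) by auto
  ultimately have "indep_sets block_events (\<Union>b. ?I b)"
    by simp
  moreover have "Int_stable (block_events i)" for i
  proof (rule Int_stableI)
    fix a b assume "a \<in> block_events i" "b \<in> block_events i"
    then obtain A B where "a = (\<lambda>\<omega>. restrict (\<lambda>k. P k \<omega>) (nullblock H0 i)) -` A \<inter> space M"
      "b = (\<lambda>\<omega>. restrict (\<lambda>k. P k \<omega>) (nullblock H0 i)) -` B \<inter> space M"
      "A \<in> sets (PiM (nullblock H0 i) (\<lambda>_. borel))" "B \<in> sets (PiM (nullblock H0 i) (\<lambda>_. borel))"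
      unfolding block_events_def by blast
    then show "a \<inter> b \<in> block_events i"
      unfolding block_events_def by (intro CollectI exI[of _ "A \<inter> B"]) auto
  qed
  ultimately have "indep_sets (\<lambda>b. sigma_sets (space M) (\<Union>i\<in>?I b. block_events i)) UNIV"
    by (intro indep_sets_collect_sigma) (auto simp: disjoint_family_on_def)
  then have "indep_set (sigma_sets (space M) (block_events (Some t))) (sets (others t))"
    unfolding indep_set_def sets_others by (simp add: case_bool_if if_distrib cong: if_cong)
  moreover have "{\<omega>\<in>space M. P t \<omega> \<in> S} \<in> sigma_sets (space M) (block_events (Some t))"
    using assms(3) by (intro sigma_sets.Basic pvalue_event_in_block_events) (simp add: nullblock_def)
  ultimately show ?thesis
    using assms(4) by (rule indep_setD)
qed

lemma sets_history_level_others: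
  fixes W :: "'a \<Rightarrow> real"
  assumes "t \<in> H0" "W \<in> borel_measurable (others t)"
  shows "{\<omega>\<in>space M. (history P af lf tf \<omega> (t - 1), W \<omega>) = (h, w)} \<in> sets (others t)"
proof -
  have "{\<omega>\<in>space M. (history P af lf tf \<omega> (t - 1), W \<omega>) = (h, w)}
      = {\<omega>\<in>space (others t). history P af lf tf \<omega> (t - 1) = h} \<inter> {\<omega>\<in>space (others t). W \<omega> = w}"
    by auto
  also have "\<dots> \<in> sets (others t)"
  proof (rule sets.Int)
    show "{\<omega>\<in>space (others t). history P af lf tf \<omega> (t - 1) = h} \<in> sets (others t)"
      using assms(1) H0_pos by (intro sets_history_eq) (auto intro: borel_measurable_others)
    show "{\<omega>\<in>space (others t). W \<omega> = w} \<in> sets (others t)"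
      using assms(2) by measurable
  qed
  finally show ?thesis .
qed

text \<open>Averaging the conditional condition over the atoms of the history; no independence
  is needed here.\<close>

lemma prob_null_conservative:
  assumes "t \<in> H0" "x \<in> {0..1}" "s \<in> {0..1}"
  shows "prob {\<omega>\<in>space M. P t \<omega> \<le> s * x} \<le> x * prob {\<omega>\<in>space M. P t \<omega> \<le> s}"
proof -
  let ?A = "\<lambda>v. {\<omega>\<in>space M. P t \<omega> \<le> v}"
  have "(\<integral>\<omega>. indicator (?A (s * x)) \<omega> \<partial>M) \<le> (\<integral>\<omega>. x * indicator (?A s) \<omega> \<partial>M)"
  proof (rule integral_mono_partition[OF finite_histories, where \<phi> = "\<lambda>\<omega>. history P af lf tf \<omega> (t - 1)"])
    fix h :: hist
    have "(\<integral>\<omega>. indicator (atom (t - 1) h) \<omega> * indicator (?A (s * x)) \<omega> \<partial>M) = prob (?A (s * x) \<inter> atom (t - 1) h)"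
      by (simp add: indicator_inter_arith[symmetric] Int_commute)
    also have "\<dots> \<le> x * prob (?A s \<inter> atom (t - 1) h)"
      by (rule conservative_on_atom[OF assms])
    also have "\<dots> = (\<integral>\<omega>. indicator (atom (t - 1) h) \<omega> * (x * indicator (?A s) \<omega>) \<partial>M)"
      by (rule integral_indicator_mult_const[where c = x and A = "?A s", symmetric]) auto
    finally show "(\<integral>\<omega>. indicator (atom (t - 1) h) \<omega> * indicator (?A (s * x)) \<omega> \<partial>M)
      \<le> (\<integral>\<omega>. indicator (atom (t - 1) h) \<omega> * (x * indicator (?A s) \<omega>) \<partial>M)" .
  qed (auto simp: integrable_indicator_iff less_top[symmetric])
  then show ?thesis
    by simp
qed

lemma weighted_rejection_le_D:
  fixes W :: "'a \<Rightarrow> real"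
  assumes indep: "nulls_indep M P H0" and t: "t \<in> H0"
    and W: "W \<in> borel_measurable (others t)" "finite (W ` space M)" "\<And>\<omega>. W \<omega> \<in> {0..1}"
  shows "(\<integral>\<omega>. indicator (rejection t) \<omega> * W \<omega> \<partial>M) \<le> (\<integral>\<omega>. D t \<omega> * W \<omega> \<partial>M)"
proof -
  have t1: "1 \<le> t" using t H0_pos by auto
  have W_M [measurable]: "W \<in> borel_measurable M"
    using subalgebra_others W(1) by (rule measurable_from_subalg)
  let ?\<phi> = "\<lambda>\<omega>. (history P af lf tf \<omega> (t - 1), W \<omega>)"
  note cell_others = sets_history_level_others[OF t W(1)]
  have cell_M: "{\<omega>\<in>space M. ?\<phi> \<omega> = i} \<in> sets M" for i
    using cell_others subalgebra_others unfolding subalgebra_def by (cases i) blast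
  show ?thesis
  proof (rule integral_mono_partition[where \<phi> = ?\<phi> and I = "{h :: hist. length h = t - 1} \<times> W ` space M"])
    fix i assume "i \<in> {h :: hist. length h = t - 1} \<times> W ` space M"
    then obtain h :: hist and w where i: "i = (h, w)" and "w \<in> {0..1}"
      using W(3) by auto
    let ?B = "{\<omega>\<in>space M. ?\<phi> \<omega> = (h, w)}"
    have split: "prob ({\<omega>\<in>space M. P t \<omega> \<le> v} \<inter> ?B) = prob {\<omega>\<in>space M. P t \<omega> \<le> v} * prob ?B" for v
      using indep_null_others[OF indep t, of "{..v}" ?B] cell_others by simp
    show "(\<integral>\<omega>. indicator {\<omega>\<in>space M. ?\<phi> \<omega> = i} \<omega> * (indicator (rejection t) \<omega> * W \<omega>) \<partial>M)
      \<le> (\<integral>\<omega>. indicator {\<omega>\<in>space M. ?\<phi> \<omega> = i} \<omega> * (D t \<omega> * W \<omega>) \<partial>M)"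
      unfolding i
    proof (rule atom_weighted_rejection_le[where h = h and c = w])
      fix x s :: real assume "x \<in> {0..1}" "s \<in> {0..1}"
      then show "prob ({\<omega>\<in>space M. P t \<omega> \<le> s * x} \<inter> ?B) \<le> x * prob ({\<omega>\<in>space M. P t \<omega> \<le> s} \<inter> ?B)"
        unfolding split mult.assoc[symmetric] using t
        by (intro mult_right_mono prob_null_conservative) auto
    qed (use t1 \<open>w \<in> {0..1}\<close> cell_M in auto)
  qed (use W cell_M finite_histories in
      \<open>auto intro!: integrable_rejection_mult integrable_D_mult simp: abs_le_iff\<close>)
qed

definition loo_weight :: "nat \<Rightarrow> nat \<Rightarrow> 'a \<Rightarrow> real" where
  "loo_weight t T \<omega> = 1 / max (real (card (Rset (P(t := \<lambda>_. 0)) af lf tf T \<omega>))) 1"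

lemma loo_weight_01: "loo_weight t T \<omega> \<in> {0..1}"
  unfolding loo_weight_def by auto

lemma finite_loo_weight_range: "finite (loo_weight t T ` space M)"
proof (rule finite_subset)
  show "loo_weight t T ` space M \<subseteq> (\<lambda>k. 1 / max (real k) 1) ` {..T}"
    unfolding loo_weight_def using card_Rset_le by (auto intro!: imageI)
qed simp

lemma borel_measurable_loo_weight: "loo_weight t T \<in> borel_measurable (others t)"
proof -
  have "(P(t := \<lambda>_. 0)) k \<in> borel_measurable (others t)" if "k \<in> {1..T}" for k
    using that by (cases "k = t") (auto intro: borel_measurable_others)
  then show ?thesis
    unfolding loo_weight_def[abs_def] using borel_measurable_card_Rset by measurable
qed

lemma loo_weight_eq_on_rejection:
  assumes "lamj P af lf tf t \<omega> < tauj P af lf tf t \<omega>" "alphaj P af lf tf t \<omega> \<le> lamj P af lf tf t \<omega>"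
    and "\<omega> \<in> rejection t"
  shows "loo_weight t T \<omega> = 1 / nR T \<omega>"
proof -
  have "Rset (P(t := \<lambda>_. 0)) af lf tf T \<omega> = Rset P af lf tf T \<omega>"
    using assms af lf tf unfolding alphaj_def lamj_def tauj_def
    by (intro Rset_fun_upd_eq[OF refl]) force
  then show ?thesis
    unfolding loo_weight_def by simp
qed

lemma loo_weight_le_on_candidate:
  assumes "monotone_past af" "monotone_past lf" "monotone_past (\<lambda>h. 1 - tf h)"
    and "P t \<omega> \<le> tauj P af lf tf t \<omega>"
  shows "loo_weight t T \<omega> \<le> 1 / nR T \<omega>"
proof -
  have "Rset P af lf tf T \<omega> \<subseteq> Rset (P(t := \<lambda>_. 0)) af lf tf T \<omega>"
    using assms af lf unfolding tauj_def by (intro Rset_subset_fun_upd[OF assms(1-3) refl]) auto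
  then have "card (Rset P af lf tf T \<omega>) \<le> card (Rset (P(t := \<lambda>_. 0)) af lf tf T \<omega>)"
    by (rule card_mono[OF finite_subset[OF Rset_subset finite_atLeastAtMost]])
  then show ?thesis
    unfolding loo_weight_def by (intro divide_left_mono max.mono) auto
qed

lemma rejection_div_nR_le:
  assumes indep: "nulls_indep M P H0" and t: "t \<in> H0"
    and mono: "monotone_past af" "monotone_past lf" "monotone_past (\<lambda>h. 1 - tf h)"
  shows "(\<integral>\<omega>. indicator (rejection t) \<omega> / nR T \<omega> \<partial>M) \<le> (\<integral>\<omega>. D t \<omega> / nR T \<omega> \<partial>M)"
proof -
  have "1 \<le> t" using t H0_pos by auto
  have [measurable]: "loo_weight t T \<in> borel_measurable M"
    using subalgebra_others borel_measurable_loo_weight by (rule measurable_from_subalg)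
  have "(\<integral>\<omega>. indicator (rejection t) \<omega> / nR T \<omega> \<partial>M)
      = (\<integral>\<omega>. indicator (rejection t) \<omega> * loo_weight t T \<omega> \<partial>M)"
    using thresholds_ordered \<open>1 \<le> t\<close>
    by (intro integral_cong_AE) (auto simp: loo_weight_eq_on_rejection indicator_def elim!: AE_mp)
  also have "\<dots> \<le> (\<integral>\<omega>. D t \<omega> * loo_weight t T \<omega> \<partial>M)"
    by (rule weighted_rejection_le_D[OF indep t borel_measurable_loo_weight finite_loo_weight_range loo_weight_01])
  also have "\<dots> \<le> (\<integral>\<omega>. D t \<omega> / nR T \<omega> \<partial>M)"
  proof (rule integral_mono_AE)
    show "AE \<omega> in M. D t \<omega> * loo_weight t T \<omega> \<le> D t \<omega> / nR T \<omega>"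
      using D_nonneg
    proof (rule AE_mp, intro AE_I2 impI)
      fix \<omega> assume "\<forall>j\<ge>1. 0 \<le> D j \<omega>"
      then have "0 \<le> D t \<omega>" using \<open>1 \<le> t\<close> by simp
      then show "D t \<omega> * loo_weight t T \<omega> \<le> D t \<omega> / nR T \<omega>"
        using loo_weight_le_on_candidate[OF mono, of t \<omega> T] mult_left_mono
        by (cases "P t \<omega> \<le> tauj P af lf tf t \<omega>") (fastforce simp: addis_term_def)+
    qed
    show "integrable M (\<lambda>\<omega>. D t \<omega> * loo_weight t T \<omega>)"
      using loo_weight_01 by (intro integrable_D_mult) (auto simp: abs_le_iff)
    show "integrable M (\<lambda>\<omega>. D t \<omega> / nR T \<omega>)"
      using integrable_D_mult[of "\<lambda>\<omega>. 1 / nR T \<omega>" t] by simp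
  qed
  finally show ?thesis .
qed

lemma FDR_le:
  assumes indep: "nulls_indep M P H0"
    and mono: "monotone_past af" "monotone_past lf" "monotone_past (\<lambda>h. 1 - tf h)"
    and FDP: "AE \<omega> in M. \<forall>t. FDPhat_ADDIS P af lf tf t \<omega> \<le> \<alpha>" and "0 \<le> \<alpha>"
  shows "FDR M P H0 af lf tf T \<le> \<alpha>"
proof -
  have nR_inverse: "1 / nR T \<omega> \<in> {0..1}" for \<omega>
    by auto
  note integrable = integrable_rejection_mult[of "\<lambda>\<omega>. 1 / nR T \<omega>"] integrable_D_mult[of "\<lambda>\<omega>. 1 / nR T \<omega>"]
  have "FDR M P H0 af lf tf T = (\<integral>\<omega>. (\<Sum>j\<in>H0 \<inter> {1..T}. indicator (rejection j) \<omega> / nR T \<omega>) \<partial>M)"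
    unfolding FDR_def
    by (intro Bochner_Integration.integral_cong) (simp_all add: card_null_rejections_eq sum_divide_distrib)
  also have "\<dots> = (\<Sum>j\<in>H0 \<inter> {1..T}. \<integral>\<omega>. indicator (rejection j) \<omega> / nR T \<omega> \<partial>M)"
    using integrable nR_inverse by (intro Bochner_Integration.integral_sum) auto
  also have "\<dots> \<le> (\<Sum>j\<in>H0 \<inter> {1..T}. \<integral>\<omega>. D j \<omega> / nR T \<omega> \<partial>M)"
    by (intro sum_mono rejection_div_nR_le[OF indep _ mono]) auto
  also have "\<dots> \<le> (\<Sum>j\<in>{1..T}. \<integral>\<omega>. D j \<omega> / nR T \<omega> \<partial>M)"
    using D_nonneg by (intro sum_mono2 integral_nonneg_AE) auto
  also have "\<dots> = (\<integral>\<omega>. FDPhat_ADDIS P af lf tf T \<omega> \<partial>M)"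
    using integrable nR_inverse
    by (simp add: FDPhat_ADDIS_eq sum_divide_distrib Bochner_Integration.integral_sum)
  also have "\<dots> \<le> (\<integral>\<omega>. \<alpha> \<partial>M)"
    by (rule integral_mono_AE') (use FDP \<open>0 \<le> \<alpha>\<close> in auto)
  also have "\<dots> = \<alpha>"
    by (simp add: prob_space)
  finally show ?thesis .
qed

end

theorem theorem1:
  fixes M :: "'a measure" and P :: "nat \<Rightarrow> 'a \<Rightarrow> real" and H0 :: "nat set"
    and \<alpha> :: real and af lf tf :: "hist \<Rightarrow> real"
  assumes "prob_space M"
    and "\<And>j. P j \<in> borel_measurable M"
    and "H0 \<subseteq> {1..}"
    and "0 < \<alpha>" and "\<alpha> < 1"
    and "\<And>h. af h \<in> {0..1}" and "\<And>h. lf h \<in> {0..1}" and "\<And>h. tf h \<in> {0..1}"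
    and "AE \<omega> in M. \<forall>j\<ge>1. tauj P af lf tf j \<omega> > lamj P af lf tf j \<omega>
                          \<and> lamj P af lf tf j \<omega> \<ge> alphaj P af lf tf j \<omega>"
    and "cond_unif_conservative M P H0 af lf tf"
    and "AE \<omega> in M. \<forall>t. FDPhat_ADDIS P af lf tf t \<omega> \<le> \<alpha>"
  shows "(\<forall>t. mFDR M P H0 af lf tf t \<le> \<alpha>) \<and>
         (nulls_indep M P H0 \<and> monotone_past af \<and> monotone_past lf
            \<and> monotone_past (\<lambda>h. 1 - tf h)
          \<longrightarrow> (\<forall>t. FDR M P H0 af lf tf t \<le> \<alpha>))"
proof -
  \<comment> \<open>of the hypotheses on \<open>\<alpha>\<close> only \<open>0 \<le> \<alpha>\<close> is used\<close>
  interpret addis M P H0 af lf tf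
    by (rule addis.intro[OF assms(1)], unfold_locales) (use assms in auto)
  show ?thesis
    using mFDR_le[OF assms(11)] FDR_le[OF _ _ _ _ assms(11)] assms(4) by simp
qed

end
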